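(* Fix $\beta>0$, $k\in\mathbb{N}$ and $0<t_0<t<\infty$. Let $(C_n)_{n\ge1}$ be the solution on $[t_0,t]$ of $$C_1\equiv1,\qquad \dot C_n=\frac{k+1}{k}(n-1)B\,C_n+\frac{n\Gamma}{2}\sum_{j=1}^{n-1}C_jC_{n-j}\quad(2\le n\le k),$$ $$\dot C_n=nB\,C_n+\frac{n\Gamma}{2}\sum_{j=1}^{n-1}C_jC_{n-j}\quad(n>k),\qquad C_n(t_0)=0\ (n\ge2)$$ (these are the coefficient equations of $\Theta_t=\Gamma(z^2\Theta^2)_z+B((z\Theta)_z-L_k)$, $\Theta(t_0,\cdot)=1$, with Lagrange multiplier $L_k=1+\sum_{j=1}^{k-1}(1-j/k)C_{j+1}z^j$), and set $\Theta(t,z)=\sum_{n\ge1}C_n(t)z^{n-1}$. Let $$\tau_k(t_0,t)=\int_{t_0}^t\Gamma(s)\exp\!\Big(\frac{k+1}{k}\int_s^tB(s')\,ds'\Big)ds .$$ Then for every $z\ge0$ with $e\,z\,\tau_k(t_0,t)<1$ the series converges and $$\Theta(t,z)\le\frac{-1}{\tau_k(t_0,t)\,z}\,W\!\left(-\tau_k(t_0,t)\,z\right).$$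
   Context: $g(s)=-\frac{s}{4\pi}\int_s^\infty K_0'''(r)\frac{r}{\sqrt{r^2-s^2}}dr$ for $s>0$ (a positive function), $K_0$ the modified Bessel function of the second kind of order $0$. $\Gamma(t)=\frac{\beta\pi}{4}t^2g(t)$ and $B(t)=\frac{\beta}{2}g(t)$. $W$ is the principal branch of the Lambert $W$ function, with $-W(-x)/x=\sum_{n\ge1}\frac{n^{n-1}}{n!}x^{n-1}$ for $0\le x\le1/e$ (value $1$ at $x=0$). *)

theory Defs
  imports "HOL-Analysis.Analysis"
begin

definition besselK0 :: "real \<Rightarrow> real" where
  "besselK0 r = integral {0..} (\<lambda>u. exp (- r * cosh u))"

definition gfun :: "real \<Rightarrow> real" where
  "gfun s = - (s / (4 * pi)) *
     integral {s<..} (\<lambda>r. (deriv ^^ 3) besselK0 r * r / sqrt (r\<^sup>2 - s\<^sup>2))"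

definition Gam :: "real \<Rightarrow> real \<Rightarrow> real" where
  "Gam \<beta> t = \<beta> * pi / 4 * t\<^sup>2 * gfun t"

definition Bfun :: "real \<Rightarrow> real \<Rightarrow> real" where
  "Bfun \<beta> t = \<beta> / 2 * gfun t"

definition lambertW :: "real \<Rightarrow> real" where
  "lambertW y = (THE w. w \<ge> -1 \<and> w * exp w = y)"

definition tau :: "real \<Rightarrow> nat \<Rightarrow> real \<Rightarrow> real \<Rightarrow> real" where
  "tau \<beta> k t0 t = integral {t0..t}
     (\<lambda>s. Gam \<beta> s * exp ((real k + 1) / real k * integral {s..t} (Bfun \<beta>)))"

end

theory Submission
  imports Defs
begin

text \<open>
  Every C_n is nonnegative, its equation having a nonnegative source term. Since
  n \<le> (k+1)/k (n-1) for n > k, comparison then dominates C_n by the solution M_n of the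
  system in which every linear rate is (k+1)/k (n-1) B. That system is solved explicitly by
  M_n = a_(n-1) \<tau>^(n-1) with \<tau>(s) = \<tau>_k(t0,s), because \<tau>' = (k+1)/k B \<tau> + \<Gamma>, and
  a_n = (n+1)^n/(n+1)! are the Taylor coefficients of -W(-x)/x.
  Partial sums P of that series satisfy P' \<le> P^2 + x P P', so P e^(-xP) is nonincreasing;
  hence y = xP satisfies y e^(-y) \<le> x and y < 1, that is y \<le> -W(-x), when x < 1/e.
  The comparison needs B, \<Gamma> > 0 and continuous: with K = -K_0''' = \<integral> cosh^3 u e^(-r cosh u) du,
  the substitution r = sqrt(s^2+w^2) gives g(s) = s/(4\<pi>) \<integral>_0^\<infinity> K(sqrt(s^2+w^2)) dw.
\<close>

section \<open>The integrals \<integral>_0^\<infinity> cosh^j u e^(-r cosh u) du\<close>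

lemma power_le_fact_mult_exp:
  fixes y :: real assumes "0 \<le> y" shows "y ^ j \<le> fact j * exp y"
proof -
  obtain t where "exp y = (\<Sum>m<Suc j. y ^ m / fact m) + exp t / fact (Suc j) * y ^ Suc j"
    using Maclaurin_exp_le[of y "Suc j"] by blast
  moreover have "y ^ j / fact j \<le> (\<Sum>m<Suc j. y ^ m / fact m)"
    by (rule member_le_sum[where f="\<lambda>m. y ^ m / fact m"]) (use assms in auto)
  ultimately have "y ^ j / fact j \<le> exp y" using assms by (simp add: zero_le_mult_iff)
  then show ?thesis by (simp add: field_simps)
qed

lemma abs_exp_minus_one_minus_le:
  fixes x :: real shows "\<bar>exp x - 1 - x\<bar> \<le> exp \<bar>x\<bar> * x\<^sup>2 / 2"
proof -
  obtain t where t: "\<bar>t\<bar> \<le> \<bar>x\<bar>" "exp x = (\<Sum>m<2. x ^ m / fact m) + exp t / fact 2 * x\<^sup>2"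
    using Maclaurin_exp_le[of x 2] by blast
  then have "\<bar>exp x - 1 - x\<bar> = exp t / 2 * x\<^sup>2" by (simp add: numeral_2_eq_2)
  also have "\<dots> \<le> exp \<bar>x\<bar> / 2 * x\<^sup>2"
    using t(1) by (intro mult_right_mono divide_right_mono) auto
  finally show ?thesis by simp
qed

definition coshK :: "nat \<Rightarrow> real \<Rightarrow> real" where
  "coshK j r = integral {0..} (\<lambda>u. cosh u ^ j * exp (- r * cosh u))"

lemma besselK0_eq_coshK: "besselK0 = coshK 0"
  by (rule ext) (simp add: besselK0_def coshK_def)

lemma cosh_power_exp_le:
  fixes r u :: real assumes "0 < r" "0 \<le> u"
  shows "cosh u ^ j * exp (- r * cosh u) \<le> fact j * (2/r)^j * exp (- (r/4) * u)"
proof -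
  have "cosh u ^ j = (2/r)^j * (r * cosh u / 2)^j"
    using assms by (simp add: power_mult_distrib[symmetric])
  also have "\<dots> \<le> (2/r)^j * (fact j * exp (r * cosh u / 2))"
    using assms by (intro mult_left_mono power_le_fact_mult_exp) auto
  finally have "cosh u ^ j * exp (- r * cosh u)
      \<le> fact j * (2/r)^j * (exp (r * cosh u / 2) * exp (- r * cosh u))"
    by (simp add: mult_right_mono mult_ac)
  also have "exp (r * cosh u / 2) * exp (- r * cosh u) = exp (- (r * cosh u / 2))"
    by (simp flip: exp_add)
  finally have *: "cosh u ^ j * exp (- r * cosh u) \<le> fact j * (2/r)^j * exp (- (r * cosh u / 2))" .
  have "u \<le> exp u + exp (-u)" using exp_ge_add_one_self[of u] exp_gt_zero[of "-u"] by linarith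
  then have "u / 2 \<le> cosh u" unfolding cosh_def by simp
  then have "exp (- (r * cosh u / 2)) \<le> exp (- (r/4) * u)" using assms by (simp add: field_simps)
  then have "fact j * (2/r)^j * exp (- (r * cosh u / 2)) \<le> fact j * (2/r)^j * exp (- (r/4) * u)"
    using assms by (intro mult_left_mono) auto
  with * show ?thesis by linarith
qed

lemma coshK_integrable:
  fixes r :: real assumes "0 < r"
  shows "(\<lambda>u::real. cosh u ^ j * exp (- r * cosh u)) integrable_on {0..}"
proof (rule measurable_bounded_by_integrable_imp_integrable_real)
  show "(\<lambda>u::real. cosh u ^ j * exp (- r * cosh u)) \<in> borel_measurable (lebesgue_on {0..})"
    by (intro continuous_imp_measurable_on_sets_lebesgue continuous_intros) auto
  show "(\<lambda>u. fact j * (2/r)^j * exp (- (r/4) * u)) integrable_on {0::real..}"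
    using integrable_cmul[OF integrable_on_exp_minus_to_infinity[of "r/4" 0], of "fact j * (2/r)^j"] assms
    by simp
  show "\<bar>cosh u ^ j * exp (- r * cosh u)\<bar> \<le> fact j * (2/r)^j * exp (- (r/4) * u)"
    if "u \<in> {0..}" for u :: real
    using cosh_power_exp_le[OF assms, of u j] that by simp
qed auto

lemma cosh_power_exp_difference_quotient_le:
  fixes c h r :: real assumes "0 < c" "h \<noteq> 0" "\<bar>h\<bar> \<le> r/2"
  shows "\<bar>(c^j * exp (- (r + h) * c) - c^j * exp (- r * c)) / h + c^Suc j * exp (- r * c)\<bar>
    \<le> \<bar>h\<bar> / 2 * (c^Suc (Suc j) * exp (- (r/2) * c))"
proof -
  have "exp (- (r + h) * c) = exp (- r * c) * exp (- h * c)"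
    by (simp add: algebra_simps flip: exp_add)
  then have "(c^j * exp (- (r + h) * c) - c^j * exp (- r * c)) / h + c^Suc j * exp (- r * c)
      = c^j * exp (- r * c) * ((exp (- h * c) - 1 - (- h * c)) / h)"
    using assms by (simp add: field_simps)
  then have "\<bar>(c^j * exp (- (r + h) * c) - c^j * exp (- r * c)) / h + c^Suc j * exp (- r * c)\<bar>
      = c^j * exp (- r * c) * (\<bar>exp (- h * c) - 1 - (- h * c)\<bar> / \<bar>h\<bar>)"
    using assms by (simp add: abs_mult)
  also have "\<dots> \<le> c^j * exp (- r * c) * ((exp (\<bar>h\<bar> * c) * (h\<^sup>2 * c\<^sup>2) / 2) / \<bar>h\<bar>)"
    using assms abs_exp_minus_one_minus_le[of "- h * c"]
    by (intro mult_left_mono divide_right_mono) (auto simp: abs_mult power_mult_distrib)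
  also have "\<dots> = \<bar>h\<bar> / 2 * (c^Suc (Suc j) * exp (- r * c + \<bar>h\<bar> * c))"
    using assms by (simp add: field_simps power2_eq_square abs_mult_self_eq flip: exp_add)
  also have "\<dots> \<le> \<bar>h\<bar> / 2 * (c^Suc (Suc j) * exp (- (r/2) * c))"
  proof -
    have "\<bar>h\<bar> * c \<le> r/2 * c" using assms by (intro mult_right_mono) auto
    then have "exp (- r * c + \<bar>h\<bar> * c) \<le> exp (- (r/2) * c)" by simp
    then show ?thesis using assms by (intro mult_left_mono) auto
  qed
  finally show ?thesis .
qed

lemma coshK_difference_quotient_le:
  assumes r: "0 < r" and y: "\<bar>y - r\<bar> < r/2" "y \<noteq> r"
  shows "\<bar>(coshK j y - coshK j r) / (y - r) + coshK (Suc j) r\<bar>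
    \<le> coshK (Suc (Suc j)) (r/2) / 2 * \<bar>y - r\<bar>"
proof -
  define h where "h = y - r"
  have "0 < y" using y r by linarith
  have "((\<lambda>u. (cosh u ^ j * exp (- y * cosh u) - cosh u ^ j * exp (- r * cosh u)) / h
        + cosh u ^ Suc j * exp (- r * cosh u))
      has_integral (coshK j y - coshK j r) / h + coshK (Suc j) r) {0..}"
    unfolding coshK_def
    by (intro has_integral_add has_integral_divide has_integral_diff integrable_integral
        coshK_integrable r \<open>0 < y\<close>)
  moreover have "(\<lambda>u. \<bar>h\<bar> / 2 * (cosh u ^ Suc (Suc j) * exp (- (r/2) * cosh u)))
      integrable_on {0..}"
    using integrable_cmul[OF coshK_integrable[of "r/2" "Suc (Suc j)"], of "\<bar>h\<bar>/2"] r
    by (simp del: power_Suc)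
  moreover have "norm ((cosh u ^ j * exp (- y * cosh u) - cosh u ^ j * exp (- r * cosh u)) / h
        + cosh u ^ Suc j * exp (- r * cosh u))
      \<le> \<bar>h\<bar> / 2 * (cosh u ^ Suc (Suc j) * exp (- (r/2) * cosh u))" for u
    using cosh_power_exp_difference_quotient_le[of "cosh u" h r j] y
    by (simp add: h_def)
  ultimately have "norm ((coshK j y - coshK j r) / h + coshK (Suc j) r)
      \<le> integral {0..} (\<lambda>u. \<bar>h\<bar> / 2 * (cosh u ^ Suc (Suc j) * exp (- (r/2) * cosh u)))"
    by (metis (no_types, lifting) integral_norm_bound_integral integral_unique has_integral_integrable)
  also have "\<dots> = coshK (Suc (Suc j)) (r/2) / 2 * \<bar>y - r\<bar>"
    by (simp add: coshK_def h_def)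
  finally show ?thesis by (simp add: h_def)
qed

lemma coshK_has_real_derivative:
  assumes "0 < r" shows "(coshK j has_real_derivative - coshK (Suc j) r) (at r)"
proof -
  have "\<forall>\<^sub>F y in at r. norm ((coshK j y - coshK j r) / (y - r) - - coshK (Suc j) r)
      \<le> coshK (Suc (Suc j)) (r/2) / 2 * \<bar>y - r\<bar>"
    unfolding eventually_at using assms coshK_difference_quotient_le[OF assms, of _ j]
    by (intro exI[of _ "r/2"]) (auto simp: dist_real_def)
  moreover have "((\<lambda>y. coshK (Suc (Suc j)) (r/2) / 2 * \<bar>y - r\<bar>) \<longlongrightarrow> 0) (at r)"
    by (rule tendsto_eq_intros refl | simp)+
  ultimately have "((\<lambda>y. (coshK j y - coshK j r) / (y - r)) \<longlongrightarrow> - coshK (Suc j) r) (at r)"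
    by (rule LIM_zero_cancel[OF Lim_null_comparison])
  then show ?thesis by (simp add: has_field_derivative_iff)
qed

lemma coshK_continuous_on: "continuous_on {0<..} (coshK j)"
  using DERIV_isCont[OF coshK_has_real_derivative] by (intro continuous_at_imp_continuous_on) auto

lemma deriv_iter_besselK0: "0 < r \<Longrightarrow> (deriv ^^ n) besselK0 r = (-1)^n * coshK n r"
proof (induction n arbitrary: r)
  case 0 then show ?case by (simp add: besselK0_eq_coshK)
next
  case (Suc n)
  have "\<forall>\<^sub>F y in nhds r. (deriv ^^ n) besselK0 y = (-1)^n * coshK n y"
    unfolding eventually_nhds using Suc by (intro exI[of _ "{0<..}"]) auto
  moreover have "((\<lambda>y. (-1)^n * coshK n y) has_real_derivative (-1)^n * - coshK (Suc n) r) (at r)"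
    by (intro DERIV_cmult coshK_has_real_derivative Suc.prems)
  ultimately have "((deriv ^^ n) besselK0 has_real_derivative (-1)^Suc n * coshK (Suc n) r) (at r)"
    using DERIV_cong_ev[OF refl _ refl] by fastforce
  then show ?case by (simp add: DERIV_imp_deriv)
qed

lemma coshK_antimono:
  assumes "0 < r" "r \<le> r'" shows "coshK j r' \<le> coshK j r"
  unfolding coshK_def
  using assms
  by (intro integral_le[OF coshK_integrable coshK_integrable]) (auto intro!: mult_left_mono)

lemma coshK_pos:
  assumes "0 < r" shows "0 < coshK j r"
proof -
  let ?f = "\<lambda>u::real. cosh u ^ j * exp (- r * cosh u)"
  have c: "continuous_on {0..1} ?f" by (intro continuous_intros)
  have "exp (- r * cosh 1) \<le> integral {0..1::real} ?f"
  proof -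
    have "exp (- r * cosh 1) \<le> ?f u" if "u \<in> {0..1}" for u
    proof -
      have "cosh u \<le> cosh 1" using that by (subst cosh_real_nonneg_le_iff) auto
      then have "exp (- r * cosh 1) \<le> exp (- r * cosh u)" using assms by simp
      moreover have "1 \<le> cosh u ^ j" using cosh_real_ge_1 by (simp add: one_le_power)
      ultimately show ?thesis
        using mult_mono[of 1 "cosh u ^ j" "exp (- r * cosh 1)" "exp (- r * cosh u)"] by simp
    qed
    then show ?thesis
      using integral_le[OF integrable_const_ivl integrable_continuous_interval[OF c]] by fastforce
  qed
  also have "\<dots> \<le> coshK j r"
    unfolding coshK_def
    by (rule integral_subset_le)
      (use integrable_continuous_interval[OF c] coshK_integrable[OF assms] in auto)
  finally show ?thesis using exp_gt_zero[of "- r * cosh 1"] by linarith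
qed

lemma coshK_le_exp_half:
  assumes "0 < r0" "r0 \<le> r" shows "coshK j r \<le> exp (- r / 2) * coshK j (r0/2)"
proof -
  have "cosh u ^ j * exp (- r * cosh u) \<le> exp (- r / 2) * (cosh u ^ j * exp (- (r0/2) * cosh u))"
    for u :: real
  proof -
    have "r / 2 + r0 / 2 * cosh u \<le> r / 2 * cosh u + r / 2 * cosh u"
      using cosh_real_ge_1[of u] assms by (intro add_mono) (auto intro: mult_right_mono mult_left_mono)
    then have "exp (- r * cosh u) \<le> exp (- r / 2) * exp (- (r0/2) * cosh u)"
      by (simp add: algebra_simps flip: exp_add)
    then show ?thesis by (simp add: mult_left_mono mult.left_commute)
  qed
  moreover have "(\<lambda>u. exp (- r / 2) * (cosh u ^ j * exp (- (r0/2) * cosh u))) integrable_on {0..}"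
    using integrable_cmul[OF coshK_integrable[of "r0/2" j], of "exp (- r / 2)"] assms by simp
  ultimately have "coshK j r
      \<le> integral {0..} (\<lambda>u. exp (- r / 2) * (cosh u ^ j * exp (- (r0/2) * cosh u)))"
    unfolding coshK_def using assms by (intro integral_le coshK_integrable) auto
  also have "\<dots> = exp (- r / 2) * coshK j (r0/2)"
    unfolding coshK_def using assms by simp
  finally show ?thesis .
qed

section \<open>Positivity and continuity of g\<close>

lemma sqrt_add_square_image_Ioi:
  fixes s :: real assumes "0 \<le> s"
  shows "(\<lambda>w. sqrt (s\<^sup>2 + w\<^sup>2)) ` {0<..} = {s<..}"
proof (intro equalityI subsetI)
  fix r assume "r \<in> (\<lambda>w. sqrt (s\<^sup>2 + w\<^sup>2)) ` {0<..}"
  then show "r \<in> {s<..}" using assms by (auto intro!: real_less_rsqrt)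
next
  fix r assume r: "r \<in> {s<..}"
  then have pos: "0 < r\<^sup>2 - s\<^sup>2" using assms by (simp add: power_strict_mono)
  show "r \<in> (\<lambda>w. sqrt (s\<^sup>2 + w\<^sup>2)) ` {0<..}"
  proof (rule image_eqI)
    show "r = sqrt (s\<^sup>2 + (sqrt (r\<^sup>2 - s\<^sup>2))\<^sup>2)" using pos r assms by simp
    show "sqrt (r\<^sup>2 - s\<^sup>2) \<in> {0<..}" using pos by simp
  qed
qed

lemma integral_Ioi_sqrt_substitution:
  fixes f :: "real \<Rightarrow> real"
  assumes s: "0 < s" and f_nonneg: "\<And>r. s < r \<Longrightarrow> 0 \<le> f r"
    and f_int: "(\<lambda>w. f (sqrt (s\<^sup>2 + w\<^sup>2))) integrable_on {0<..}"
  shows "integral {s<..} (\<lambda>r. f r * r / sqrt (r\<^sup>2 - s\<^sup>2)) = integral {0<..} (\<lambda>w. f (sqrt (s\<^sup>2 + w\<^sup>2)))"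
proof -
  let ?g = "\<lambda>w. sqrt (s\<^sup>2 + w\<^sup>2)"
  let ?g' = "\<lambda>w. w / sqrt (s\<^sup>2 + w\<^sup>2)"
  let ?f = "\<lambda>r. f r * r / sqrt (r\<^sup>2 - s\<^sup>2)"
  have der: "(?g has_field_derivative ?g' w) (at w within {0<..})" for w
  proof -
    have "0 < s\<^sup>2 + w\<^sup>2" using s by (simp add: add_pos_nonneg)
    then show ?thesis by (auto intro!: derivative_eq_intros simp: field_simps)
  qed
  have inj: "inj_on ?g {0<..}"
    by (rule inj_onI) (simp add: power2_eq_iff_nonneg)
  have img: "?g ` {0<..} = {s<..}" using s by (intro sqrt_add_square_image_Ioi) simp
  have cancel: "\<bar>?g' w\<bar> * ?f (?g w) = f (?g w)" if "w \<in> {0<..}" for w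
  proof -
    define R where "R = ?g w"
    have "0 < R" unfolding R_def using s by (simp add: add_pos_nonneg)
    moreover have "sqrt (R\<^sup>2 - s\<^sup>2) = w" unfolding R_def using that by simp
    moreover have "\<bar>w / R\<bar> * (f R * R / w) = f R" if "0 < w" "0 < R" for w R :: real
      using that by (simp add: field_simps)
    ultimately show ?thesis using that by (simp add: R_def [symmetric])
  qed
  have "(\<lambda>w. \<bar>?g' w\<bar> * ?f (?g w)) absolutely_integrable_on {0<..}"
  proof (rule nonnegative_absolutely_integrable_1)
    show "(\<lambda>w. \<bar>?g' w\<bar> * ?f (?g w)) integrable_on {0<..}"
      using f_int by (simp only: integrable_cong[OF cancel])
    show "0 \<le> \<bar>?g' w\<bar> * ?f (?g w)" if "w \<in> {0<..}" for w
      using cancel[OF that] f_nonneg[of "?g w"] that s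
      by (simp add: real_less_rsqrt)
  qed
  moreover have "integral {0<..} (\<lambda>w. \<bar>?g' w\<bar> * ?f (?g w)) = integral {0<..} (\<lambda>w. f (?g w))"
    using cancel by (rule integral_cong)
  ultimately have "?f absolutely_integrable_on (?g ` {0<..})
      \<and> integral (?g ` {0<..}) ?f = integral {0<..} (\<lambda>w. f (?g w))"
    by (intro has_absolute_integral_change_of_variables_1'[THEN iffD1, OF _ der inj]) auto
  then show ?thesis by (simp only: img)
qed

definition coshK3_line :: "real \<Rightarrow> real" where
  "coshK3_line s = integral {0<..} (\<lambda>w. coshK 3 (sqrt (s\<^sup>2 + w\<^sup>2)))"

lemma coshK_sqrt_le:
  assumes "0 < s0" "s0 \<le> s" "0 \<le> w"
  shows "\<bar>coshK j (sqrt (s\<^sup>2 + w\<^sup>2))\<bar> \<le> coshK j (s0/2) * exp (- (1/2) * w)"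
proof -
  let ?r = "sqrt (s\<^sup>2 + w\<^sup>2)"
  have "s \<le> ?r" "w \<le> ?r" using assms by (auto intro!: real_le_rsqrt)
  then have "s0 \<le> ?r" using assms by linarith
  then have "\<bar>coshK j ?r\<bar> = coshK j ?r" using assms coshK_pos[of ?r j] by linarith
  also have "\<dots> \<le> exp (- ?r / 2) * coshK j (s0/2)"
    using \<open>s0 \<le> ?r\<close> assms by (intro coshK_le_exp_half)
  also have "\<dots> \<le> exp (- (1/2) * w) * coshK j (s0/2)"
    using \<open>w \<le> ?r\<close> coshK_pos[of "s0/2" j] assms by (intro mult_right_mono) auto
  finally show ?thesis by (simp add: mult.commute)
qed

lemma exp_minus_half_integrable_Ioi: "(\<lambda>w::real. c * exp (- (1/2) * w)) integrable_on {0<..}"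
proof (rule integrable_spike_set)
  show "(\<lambda>w::real. c * exp (- (1/2) * w)) integrable_on {0..}"
    using integrable_cmul[OF integrable_on_exp_minus_to_infinity[of "1/2" 0], of c] by simp
qed (auto intro: negligible_subset[of "{0}"])

lemma coshK_sqrt_continuous_on:
  assumes "0 < s" shows "continuous_on {0<..} (\<lambda>w. coshK j (sqrt (s\<^sup>2 + w\<^sup>2)))"
  using assms
  by (intro continuous_on_compose2[OF coshK_continuous_on] continuous_intros)
    (auto intro!: add_pos_nonneg)

lemma coshK_sqrt_integrable:
  assumes "0 < s" shows "(\<lambda>w. coshK j (sqrt (s\<^sup>2 + w\<^sup>2))) integrable_on {0<..}"
proof (rule measurable_bounded_by_integrable_imp_integrable_real)
  show "(\<lambda>w. coshK j (sqrt (s\<^sup>2 + w\<^sup>2))) \<in> borel_measurable (lebesgue_on {0<..})"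
    by (rule continuous_imp_measurable_on_sets_lebesgue[OF coshK_sqrt_continuous_on[OF assms]]) simp
  show "\<bar>coshK j (sqrt (s\<^sup>2 + w\<^sup>2))\<bar> \<le> coshK j (s/2) * exp (- (1/2) * w)"
    if "w \<in> {0<..}" for w
    using coshK_sqrt_le[of s s w] assms that by auto
  show "(\<lambda>w. coshK j (s/2) * exp (- (1/2) * w)) integrable_on {0<..}"
    by (rule exp_minus_half_integrable_Ioi)
qed simp

lemma coshK3_line_pos: assumes "0 < s" shows "0 < coshK3_line s"
proof -
  let ?f = "\<lambda>w. coshK 3 (sqrt (s\<^sup>2 + w\<^sup>2))"
  let ?c = "coshK 3 (sqrt (s\<^sup>2 + 4))"
  have pos: "0 < sqrt (s\<^sup>2 + w\<^sup>2)" for w using assms by (simp add: add_pos_nonneg)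
  have cont: "continuous_on {1..2} ?f"
    by (rule continuous_on_subset[OF coshK_sqrt_continuous_on[OF assms]]) auto
  have "?c \<le> ?f w" if "w \<in> {1..2}" for w
  proof (rule coshK_antimono[OF pos])
    have "w\<^sup>2 \<le> 2\<^sup>2" using that by (intro power_mono) auto
    then show "sqrt (s\<^sup>2 + w\<^sup>2) \<le> sqrt (s\<^sup>2 + 4)" by simp
  qed
  then have "integral {1..2::real} (\<lambda>w. ?c) \<le> integral {1..2} ?f"
    by (intro integral_le integrable_const_ivl integrable_continuous_interval[OF cont])
  also have "\<dots> \<le> coshK3_line s"
    unfolding coshK3_line_def
  proof (rule integral_subset_le)
    show "\<forall>w\<in>{0<..}. 0 \<le> ?f w" using coshK_pos[OF pos] by (simp add: less_imp_le)
  qed (use integrable_continuous_interval[OF cont] coshK_sqrt_integrable[OF assms] in auto)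
  finally show ?thesis using coshK_pos[OF pos[of 2], of 3] by simp
qed

lemma coshK3_line_continuous_on:
  assumes "0 < a" shows "continuous_on {a..b} coshK3_line"
proof (rule continuous_on_sequentiallyI)
  fix u :: "nat \<Rightarrow> real" and x
  assume u: "\<forall>n. u n \<in> {a..b}" and x: "x \<in> {a..b}" and lim: "u \<longlonglongrightarrow> x"
  have "(\<lambda>n. integral {0<..} (\<lambda>w. coshK 3 (sqrt ((u n)\<^sup>2 + w\<^sup>2))))
      \<longlonglongrightarrow> integral {0<..} (\<lambda>w. coshK 3 (sqrt (x\<^sup>2 + w\<^sup>2)))"
  proof (rule dominated_convergence(2))
    show "(\<lambda>w. coshK 3 (sqrt ((u n)\<^sup>2 + w\<^sup>2))) integrable_on {0<..}" for n
      using u assms by (intro coshK_sqrt_integrable) (meson atLeastAtMost_iff less_le_trans)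
    show "(\<lambda>w::real. coshK 3 (a/2) * exp (- (1/2) * w)) integrable_on {0<..}"
      by (rule exp_minus_half_integrable_Ioi)
    show "norm (coshK 3 (sqrt ((u n)\<^sup>2 + w\<^sup>2))) \<le> coshK 3 (a/2) * exp (- (1/2) * w)"
      if "w \<in> {0<..}" for n w
      using coshK_sqrt_le[of a "u n" w] assms u that by auto
    show "(\<lambda>n. coshK 3 (sqrt ((u n)\<^sup>2 + w\<^sup>2))) \<longlonglongrightarrow> coshK 3 (sqrt (x\<^sup>2 + w\<^sup>2))" for w
    proof (rule isCont_tendsto_compose[OF DERIV_isCont[OF coshK_has_real_derivative]])
      show "0 < sqrt (x\<^sup>2 + w\<^sup>2)" using x assms by (simp add: add_pos_nonneg)
    qed (intro tendsto_intros lim)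
  qed
  then show "(\<lambda>n. coshK3_line (u n)) \<longlonglongrightarrow> coshK3_line x" unfolding coshK3_line_def .
qed

lemma gfun_eq_coshK3_line: assumes "0 < s" shows "gfun s = s / (4 * pi) * coshK3_line s"
proof -
  have "integral {s<..} (\<lambda>r. (deriv ^^ 3) besselK0 r * r / sqrt (r\<^sup>2 - s\<^sup>2))
      = integral {s<..} (\<lambda>r. - (coshK 3 r * r / sqrt (r\<^sup>2 - s\<^sup>2)))"
    using assms by (intro integral_cong) (simp add: deriv_iter_besselK0)
  also have "\<dots> = - coshK3_line s"
    unfolding integral_neg coshK3_line_def using assms
    by (subst integral_Ioi_sqrt_substitution)
      (auto intro!: less_imp_le coshK_pos coshK_sqrt_integrable)
  finally show ?thesis unfolding gfun_def by simp
qed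

lemma gfun_pos: "0 < s \<Longrightarrow> 0 < gfun s"
  by (simp add: gfun_eq_coshK3_line coshK3_line_pos)

lemma gfun_continuous_on:
  assumes "0 < a" shows "continuous_on {a..b} gfun"
proof (rule continuous_on_eq)
  show "continuous_on {a..b} (\<lambda>s. s / (4 * pi) * coshK3_line s)"
    by (intro continuous_intros coshK3_line_continuous_on assms) simp
qed (use assms in \<open>simp add: gfun_eq_coshK3_line\<close>)

section \<open>The series of -W(-x)/x\<close>

text \<open>y = -W(-x)/x solves y = e^(xy), hence y' = y^2 + x y y'; comparing coefficients of x^m
  gives this recursion.\<close>
fun lambert_coeff :: "nat \<Rightarrow> real" where
  "lambert_coeff 0 = 1"
| "lambert_coeff (Suc m) =
     (real m + 2) / (2 * (real m + 1)) * (\<Sum>i\<le>m. lambert_coeff i * lambert_coeff (m - i))"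

lemma lambert_coeff_nonneg: "0 \<le> lambert_coeff n"
proof (induction n rule: less_induct)
  case (less n)
  show ?case
  proof (cases n)
    case (Suc m)
    have "0 \<le> (\<Sum>i\<le>m. lambert_coeff i * lambert_coeff (m - i))"
      using less Suc by (intro sum_nonneg mult_nonneg_nonneg) auto
    then show ?thesis using Suc by simp
  qed simp
qed

lemma lambert_coeff_Suc:
  "(real m + 1) * lambert_coeff (Suc m) = (real m + 2) / 2 * (\<Sum>i\<le>m. lambert_coeff i * lambert_coeff (m - i))"
  by (simp add: field_simps)

definition lambert_partial :: "nat \<Rightarrow> real \<Rightarrow> real" where
  "lambert_partial N x = (\<Sum>i<N. lambert_coeff i * x ^ i)"

definition lambert_partial' :: "nat \<Rightarrow> real \<Rightarrow> real" where
  "lambert_partial' N x = (\<Sum>i<N. lambert_coeff i * (real i * x ^ (i - Suc 0)))"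

lemma lambert_partial_has_real_derivative:
  "(lambert_partial N has_real_derivative lambert_partial' N x) (at x)"
  unfolding lambert_partial_def[abs_def] lambert_partial'_def
  by (intro DERIV_sum DERIV_cmult DERIV_pow)

lemma lambert_partial_zero_le: "lambert_partial N 0 \<le> 1"
  by (cases N) (simp_all add: lambert_partial_def sum.lessThan_Suc_shift)

lemma lambert_partial'_eq_triangle_sum:
  "lambert_partial' N x = (\<Sum>(i,j)\<in>{(i,j). i + j < N - 1}.
     (real i + real j + 2) / 2 * (lambert_coeff i * lambert_coeff j * x ^ (i + j)))"
proof -
  have "lambert_partial' N x = (\<Sum>k<N - 1. (real k + 1) * lambert_coeff (Suc k) * x ^ k)"
  proof (cases N)
    case (Suc n)
    show ?thesis unfolding lambert_partial'_def Suc sum.lessThan_Suc_shift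
      by (simp add: algebra_simps del: lambert_coeff.simps)
  qed (simp add: lambert_partial'_def)
  also have "\<dots> = (\<Sum>k<N - 1. \<Sum>i\<le>k.
      (real i + real (k - i) + 2) / 2 * (lambert_coeff i * lambert_coeff (k - i) * x ^ (i + (k - i))))"
  proof (rule sum.cong[OF refl])
    fix k
    have "(\<Sum>i\<le>k. (real i + real (k - i) + 2) / 2
          * (lambert_coeff i * lambert_coeff (k - i) * x ^ (i + (k - i))))
        = ((real k + 2) / 2 * (\<Sum>i\<le>k. lambert_coeff i * lambert_coeff (k - i))) * x ^ k"
      by (simp add: sum_distrib_left sum_distrib_right of_nat_diff mult_ac del: lambert_coeff.simps)
    then show "(real k + 1) * lambert_coeff (Suc k) * x ^ k = (\<Sum>i\<le>k. (real i + real (k - i) + 2) / 2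
          * (lambert_coeff i * lambert_coeff (k - i) * x ^ (i + (k - i))))"
      by (simp only: lambert_coeff_Suc)
  qed
  also have "\<dots> = (\<Sum>(i,j)\<in>{(i,j). i + j < N - 1}.
      (real i + real j + 2) / 2 * (lambert_coeff i * lambert_coeff j * x ^ (i + j)))"
    by (rule sum.triangle_reindex[symmetric])
  finally show ?thesis .
qed

lemma lambert_partial_ode_rhs_eq_square_sum:
  "(lambert_partial N x)\<^sup>2 + x * lambert_partial N x * lambert_partial' N x
    = (\<Sum>i<N. \<Sum>j<N. (real i + real j + 2) / 2 * (lambert_coeff i * lambert_coeff j * x ^ (i + j)))"
proof -
  define F where "F i j = lambert_coeff i * lambert_coeff j * x ^ (i + j)" for i j
  have x_partial': "x * lambert_partial' N x = (\<Sum>j<N. real j * lambert_coeff j * x ^ j)"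
    unfolding lambert_partial'_def sum_distrib_left
    by (intro sum.cong refl) (auto simp: algebra_simps power_eq_if)
  have "x * lambert_partial N x * lambert_partial' N x = lambert_partial N x * (x * lambert_partial' N x)"
    by simp
  also have "\<dots> = (\<Sum>i<N. \<Sum>j<N. real j * F i j)"
    unfolding x_partial' lambert_partial_def sum_product F_def by (simp add: power_add ac_simps)
  finally have "x * lambert_partial N x * lambert_partial' N x = (\<Sum>i<N. \<Sum>j<N. real j * F i j)" .
  moreover have "(lambert_partial N x)\<^sup>2 = (\<Sum>i<N. \<Sum>j<N. F i j)"
    unfolding power2_eq_square lambert_partial_def sum_product F_def by (simp add: power_add ac_simps)
  ultimately have "(lambert_partial N x)\<^sup>2 + x * lambert_partial N x * lambert_partial' N x
      = (\<Sum>i<N. \<Sum>j<N. (1 + real j) * F i j)"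
    by (simp add: sum.distrib[symmetric] algebra_simps)
  also have "\<dots> = (\<Sum>i<N. \<Sum>j<N. (real i + real j + 2) / 2 * F i j)"
  proof -
    have "(\<Sum>i<N. \<Sum>j<N. (1 + real j) * F i j) = (\<Sum>i<N. \<Sum>j<N. (1 + real i) * F i j)"
      by (subst sum.swap) (simp add: F_def mult_ac add.commute)
    then have "2 * (\<Sum>i<N. \<Sum>j<N. (1 + real j) * F i j)
        = (\<Sum>i<N. \<Sum>j<N. (1 + real j) * F i j + (1 + real i) * F i j)"
      by (simp add: sum.distrib)
    also have "\<dots> = (\<Sum>i<N. \<Sum>j<N. 2 * ((real i + real j + 2) / 2 * F i j))"
      by (intro sum.cong refl) (simp add: field_simps)
    also have "\<dots> = 2 * (\<Sum>i<N. \<Sum>j<N. (real i + real j + 2) / 2 * F i j)"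
      by (simp add: sum_distrib_left)
    finally show ?thesis by simp
  qed
  finally show ?thesis by (simp add: F_def)
qed

lemma lambert_partial'_le:
  assumes "0 \<le> x"
  shows "lambert_partial' N x \<le> (lambert_partial N x)\<^sup>2 + x * lambert_partial N x * lambert_partial' N x"
proof -
  have "{(i,j). i + j < N - 1} \<subseteq> {..<N} \<times> {..<N}" by auto
  then have "lambert_partial' N x \<le> (\<Sum>(i,j)\<in>{..<N} \<times> {..<N}.
      (real i + real j + 2) / 2 * (lambert_coeff i * lambert_coeff j * x ^ (i + j)))"
    unfolding lambert_partial'_eq_triangle_sum using assms
    by (intro sum_mono2) (auto intro!: mult_nonneg_nonneg lambert_coeff_nonneg)
  then show ?thesis
    unfolding lambert_partial_ode_rhs_eq_square_sum by (simp add: sum.cartesian_product)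
qed

lemma lambert_partial_mult_exp_le:
  assumes "0 \<le> x"
  shows "x * lambert_partial N x * exp (- (x * lambert_partial N x)) \<le> x"
proof -
  define P where "P = lambert_partial N"
  define P' where "P' = lambert_partial' N"
  define \<psi> where "\<psi> y = P y * exp (- (y * P y))" for y
  have "(\<psi> has_real_derivative exp (- (y * P y)) * (P' y - (P y)\<^sup>2 - y * P y * P' y)) (at y)" for y
  proof -
    have "(\<psi> has_real_derivative
        P' y * exp (- (y * P y)) + exp (- (y * P y)) * (- (1 * P y + P' y * y)) * P y) (at y)"
      unfolding \<psi>_def P_def P'_def
      by (intro DERIV_mult lambert_partial_has_real_derivative DERIV_chain2[OF DERIV_exp]
          DERIV_minus DERIV_ident)
    then show ?thesis by (rule DERIV_cong) (simp add: algebra_simps power2_eq_square)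
  qed
  moreover have "exp (- (y * P y)) * (P' y - (P y)\<^sup>2 - y * P y * P' y) \<le> 0" if "0 \<le> y" for y
    using lambert_partial'_le[OF that, of N] by (simp add: P_def P'_def mult_nonneg_nonpos)
  ultimately have "\<psi> x \<le> \<psi> 0"
    using assms by (metis DERIV_nonpos_imp_nonincreasing)
  also have "\<psi> 0 \<le> 1" unfolding \<psi>_def P_def using lambert_partial_zero_le by simp
  finally show ?thesis
    using mult_left_mono[of "\<psi> x" 1 x] assms by (simp add: \<psi>_def P_def mult.assoc)
qed

lemma mult_lambert_partial_less_one:
  assumes "0 \<le> x" "x < exp (-1)" shows "x * lambert_partial N x < 1"
proof (rule ccontr)
  assume "\<not> x * lambert_partial N x < 1"
  moreover have "continuous_on {0..x} (\<lambda>y. y * lambert_partial N y)"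
    unfolding lambert_partial_def by (intro continuous_intros)
  ultimately obtain y where y: "0 \<le> y" "y \<le> x" "y * lambert_partial N y = 1"
    using IVT'[of "\<lambda>y. y * lambert_partial N y" 0 1 x] assms(1) by auto
  then have "exp (-1) \<le> y" using lambert_partial_mult_exp_le[OF y(1), of N] by simp
  then show False using y(2) assms(2) by simp
qed

lemma mult_exp_strict_mono:
  fixes u v :: real assumes "-1 \<le> u" "u < v" shows "u * exp u < v * exp v"
proof (rule DERIV_pos_imp_increasing_open[OF assms(2)])
  fix y :: real assume "u < y" "y < v"
  then have "0 < exp y * (1 + y)" using assms by simp
  then show "\<exists>d. ((\<lambda>y. y * exp y) has_real_derivative d) (at y) \<and> 0 < d"
    by (auto intro!: derivative_eq_intros simp: algebra_simps)
qed (intro continuous_intros)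

lemma lambertW_mult_exp:
  assumes "-1 \<le> w" shows "lambertW (w * exp w) = w"
  unfolding lambertW_def
proof (rule the_equality)
  fix v assume v: "-1 \<le> v \<and> v * exp v = w * exp w"
  show "v = w"
    using mult_exp_strict_mono[of v w] mult_exp_strict_mono[of w v] v assms
    by (cases v w rule: linorder_cases) auto
qed (use assms in auto)

lemma lambert_partial_le_lambertW:
  assumes "0 < x" "x < exp (-1)"
  shows "lambert_partial N x \<le> - 1 / x * lambertW (- x)"
proof -
  obtain w where w: "0 \<le> w" "w \<le> 1" "w * exp (- w) = x"
    using IVT'[of "\<lambda>y::real. y * exp (- y)" 0 x 1] assms
    by (force intro: continuous_intros)
  then have "w \<noteq> 1" using assms(2) by auto
  with w have "w < 1" by simp
  have W: "lambertW (- x) = - w"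
    using lambertW_mult_exp[of "- w"] w \<open>w < 1\<close> by simp
  let ?y = "x * lambert_partial N x"
  have "?y < 1" using mult_lambert_partial_less_one assms by simp
  have "?y \<le> w"
  proof (rule ccontr)
    assume "\<not> ?y \<le> w"
    then have "- ?y * exp (- ?y) < - w * exp (- w)"
      using mult_exp_strict_mono[of "- ?y" "- w"] \<open>?y < 1\<close> by simp
    then show False using lambert_partial_mult_exp_le[of x N] assms w(3) by simp
  qed
  then show ?thesis using W assms by (simp add: field_simps)
qed

lemma majorized_series_le_lambertW:
  fixes c :: "nat \<Rightarrow> real"
  assumes c_nonneg: "\<And>n. 0 \<le> c n" and c_le: "\<And>n. c n \<le> lambert_coeff n * T ^ n"
    and "0 < T" "0 \<le> z" "exp 1 * z * T < 1"
  shows "summable (\<lambda>n. c n * z ^ n)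
    \<and> (\<Sum>n. c n * z ^ n) \<le> (if z = 0 then 1 else - 1 / (T * z) * lambertW (- T * z))"
proof -
  define R where "R = (if z = 0 then 1 else - 1 / (T * z) * lambertW (- T * z))"
  have partial_le: "(\<Sum>n<N. c n * z ^ n) \<le> R" for N
  proof (cases "z = 0")
    case True
    then show ?thesis using c_le[of 0] by (cases N) (simp_all add: R_def sum.lessThan_Suc_shift)
  next
    case False
    then have x: "0 < T * z" "T * z < exp (-1)"
      using assms by (simp_all add: exp_minus field_simps)
    have "(\<Sum>n<N. c n * z ^ n) \<le> (\<Sum>n<N. lambert_coeff n * (T * z) ^ n)"
      using mult_right_mono[OF c_le, of "z ^ _"] assms
      by (intro sum_mono) (simp add: power_mult_distrib mult.assoc)
    also have "\<dots> \<le> R"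
      using lambert_partial_le_lambertW[OF x] False by (simp add: R_def lambert_partial_def)
    finally show ?thesis .
  qed
  have "summable (\<lambda>n. c n * z ^ n)"
    using c_nonneg assms(4) by (intro summableI_nonneg_bounded[OF _ partial_le]) simp
  with partial_le show ?thesis unfolding R_def[symmetric] by (blast intro: suminf_le_const)
qed

section \<open>Comparison for the coefficient equations\<close>

lemma nonneg_if_linear_differential_inequality:
  fixes f f' L :: "real \<Rightarrow> real"
  assumes L_cont: "continuous_on {a..b} L"
    and f_deriv: "\<And>s. s \<in> {a..b} \<Longrightarrow> (f has_real_derivative f' s) (at s within {a..b})"
    and f'_ge: "\<And>s. s \<in> {a..b} \<Longrightarrow> L s * f s \<le> f' s"
    and "0 \<le> f a" and s: "s \<in> {a..b}"
  shows "0 \<le> f s"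
proof -
  define h where "h u = f u * exp (- integral {a..u} L)" for u
  have h_deriv: "(h has_real_derivative exp (- integral {a..u} L) * (f' u - L u * f u))
      (at u within {a..b})" if u: "u \<in> {a..b}" for u
  proof -
    have "((\<lambda>u. integral {a..u} L) has_real_derivative L u) (at u within {a..b})"
      unfolding has_real_derivative_iff_has_vector_derivative
      by (rule integral_has_vector_derivative[OF L_cont u])
    then have "(h has_real_derivative f' u * exp (- integral {a..u} L)
        + exp (- integral {a..u} L) * (- L u) * f u) (at u within {a..b})"
      unfolding h_def[abs_def] using f_deriv[OF u]
      by (intro DERIV_mult DERIV_chain'[OF _ DERIV_exp] DERIV_minus)
    then show ?thesis by (rule DERIV_cong) (simp add: algebra_simps)
  qed
  have "h a \<le> h s"
  proof (rule DERIV_nonneg_imp_increasing_open[of a s h])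
    show "a \<le> s" using s by simp
    have "continuous_on {a..b} h"
      using h_deriv DERIV_continuous continuous_on_eq_continuous_within by blast
    then show "continuous_on {a..s} h" by (rule continuous_on_subset) (use s in auto)
  next
    fix x assume x: "a < x" "x < s"
    then have "(h has_real_derivative exp (- integral {a..x} L) * (f' x - L x * f x)) (at x)"
      using h_deriv[of x] s by (simp add: at_within_Icc_at)
    moreover have "0 \<le> exp (- integral {a..x} L) * (f' x - L x * f x)"
      using f'_ge[of x] x s by simp
    ultimately show "\<exists>y. (h has_real_derivative y) (at x) \<and> 0 \<le> y" by blast
  qed
  then have "0 \<le> f s * exp (- integral {a..s} L)" using \<open>0 \<le> f a\<close> by (simp add: h_def)
  then show ?thesis by (simp add: zero_le_mult_iff)
qed

locale coefficient_ode =
  fixes \<beta> t0 t :: real and k :: nat and C :: "nat \<Rightarrow> real \<Rightarrow> real"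
  assumes beta_pos: "\<beta> > 0" and k_ge_1: "k \<ge> 1" and t0_pos: "0 < t0" and t0_less: "t0 < t"
    and C1: "\<And>s. s \<in> {t0..t} \<Longrightarrow> C 1 s = 1"
    and Csmall: "\<And>n s. 2 \<le> n \<Longrightarrow> n \<le> k \<Longrightarrow> s \<in> {t0..t} \<Longrightarrow>
       (C n has_real_derivative
          ((real k + 1) / real k * real (n - 1) * Bfun \<beta> s * C n s
           + real n * Gam \<beta> s / 2 * (\<Sum>j=1..n-1. C j s * C (n - j) s)))
        (at s within {t0..t})"
    and Clarge: "\<And>n s. k < n \<Longrightarrow> n \<ge> 2 \<Longrightarrow> s \<in> {t0..t} \<Longrightarrow>
       (C n has_real_derivative
          (real n * Bfun \<beta> s * C n s
           + real n * Gam \<beta> s / 2 * (\<Sum>j=1..n-1. C j s * C (n - j) s)))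
        (at s within {t0..t})"
    and Cinit: "\<And>n. n \<ge> 2 \<Longrightarrow> C n t0 = 0"
begin

definition kfactor :: real where "kfactor = (real k + 1) / real k"

lemma Bfun_pos: "s \<in> {t0..t} \<Longrightarrow> 0 < Bfun \<beta> s"
  unfolding Bfun_def using beta_pos gfun_pos[of s] t0_pos by simp

lemma Gam_pos: "s \<in> {t0..t} \<Longrightarrow> 0 < Gam \<beta> s"
  unfolding Gam_def using beta_pos gfun_pos[of s] t0_pos by simp

lemma Bfun_continuous_on: "continuous_on {t0..t} (Bfun \<beta>)"
  unfolding Bfun_def[abs_def] by (intro continuous_intros gfun_continuous_on t0_pos)

lemma Gam_continuous_on: "continuous_on {t0..t} (Gam \<beta>)"
  unfolding Gam_def[abs_def] by (intro continuous_intros gfun_continuous_on t0_pos)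

definition IB :: "real \<Rightarrow> real" where "IB s = integral {t0..s} (Bfun \<beta>)"

definition JG :: "real \<Rightarrow> real" where
  "JG s = integral {t0..s} (\<lambda>r. Gam \<beta> r * exp (- (kfactor * IB r)))"

text \<open>T is \<tau>_k(t0, \<cdot>) (tau_eq_T) rewritten with an integrating factor, so that
  T' = (k+1)/k B T + \<Gamma>.\<close>
definition T :: "real \<Rightarrow> real" where "T s = exp (kfactor * IB s) * JG s"

lemma IB_has_real_derivative:
  "s \<in> {t0..t} \<Longrightarrow> (IB has_real_derivative Bfun \<beta> s) (at s within {t0..t})"
  unfolding IB_def[abs_def] has_real_derivative_iff_has_vector_derivative
  by (rule integral_has_vector_derivative[OF Bfun_continuous_on])

lemma JG_integrand_continuous_on:
  "continuous_on {t0..t} (\<lambda>r. Gam \<beta> r * exp (- (kfactor * IB r)))"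
proof -
  have "continuous_on {t0..t} IB"
    using IB_has_real_derivative DERIV_continuous continuous_on_eq_continuous_within by blast
  then show ?thesis by (intro continuous_intros Gam_continuous_on)
qed

lemma JG_has_real_derivative:
  "s \<in> {t0..t} \<Longrightarrow>
    (JG has_real_derivative Gam \<beta> s * exp (- (kfactor * IB s))) (at s within {t0..t})"
  unfolding JG_def[abs_def] has_real_derivative_iff_has_vector_derivative
  by (rule integral_has_vector_derivative[OF JG_integrand_continuous_on])

lemma JG_integrable: "s \<in> {t0..t} \<Longrightarrow>
    (\<lambda>r. Gam \<beta> r * exp (- (kfactor * IB r))) integrable_on {t0..s}"
  by (rule integrable_continuous_interval, rule continuous_on_subset[OF JG_integrand_continuous_on])
    auto

lemma T_nonneg: "s \<in> {t0..t} \<Longrightarrow> 0 \<le> T s"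
  unfolding T_def JG_def using Gam_pos
  by (intro mult_nonneg_nonneg integral_nonneg JG_integrable) (auto intro: less_imp_le)

lemma T_pos: "0 < T t"
proof -
  let ?h = "\<lambda>r. Gam \<beta> r * exp (- (kfactor * IB r))"
  obtain m where m: "m \<in> {t0..t}" "\<forall>y\<in>{t0..t}. ?h m \<le> ?h y"
    using continuous_attains_inf[OF compact_Icc _ JG_integrand_continuous_on] t0_less by auto
  have "?h m * (t - t0) = integral {t0..t} (\<lambda>r. ?h m)" using t0_less by simp
  also have "\<dots> \<le> JG t"
    unfolding JG_def using m(2) t0_less by (intro integral_le JG_integrable) auto
  finally have "?h m * (t - t0) \<le> JG t" .
  moreover have "0 < ?h m * (t - t0)" using Gam_pos[OF m(1)] t0_less by simp
  ultimately show ?thesis unfolding T_def by simp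
qed

lemma T_t0: "T t0 = 0"
  unfolding T_def JG_def by simp

lemma T_has_real_derivative:
  assumes s: "s \<in> {t0..t}"
  shows "(T has_real_derivative kfactor * Bfun \<beta> s * T s + Gam \<beta> s) (at s within {t0..t})"
proof -
  have "(T has_real_derivative exp (kfactor * IB s) * (kfactor * Bfun \<beta> s) * JG s
      + Gam \<beta> s * exp (- (kfactor * IB s)) * exp (kfactor * IB s)) (at s within {t0..t})"
    unfolding T_def[abs_def]
    by (intro DERIV_mult DERIV_chain'[OF _ DERIV_exp] DERIV_cmult IB_has_real_derivative
        JG_has_real_derivative s)
  then show ?thesis by (rule DERIV_cong) (simp add: T_def algebra_simps exp_minus)
qed

lemma tau_eq_T:
  assumes s: "s \<in> {t0..t}" shows "tau \<beta> k t0 s = T s"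
proof -
  have "tau \<beta> k t0 s = integral {t0..s} (\<lambda>r. exp (kfactor * IB s) * (Gam \<beta> r * exp (- (kfactor * IB r))))"
    unfolding tau_def kfactor_def[symmetric]
  proof (rule integral_cong)
    fix r assume r: "r \<in> {t0..s}"
    have "Bfun \<beta> integrable_on {t0..s}"
      by (rule integrable_continuous_interval, rule continuous_on_subset[OF Bfun_continuous_on])
        (use s in auto)
    then have "IB r + integral {r..s} (Bfun \<beta>) = IB s"
      unfolding IB_def using r by (intro Henstock_Kurzweil_Integration.integral_combine) auto
    then show "Gam \<beta> r * exp (kfactor * integral {r..s} (Bfun \<beta>))
        = exp (kfactor * IB s) * (Gam \<beta> r * exp (- (kfactor * IB r)))"
      by (simp add: algebra_simps flip: exp_add) (metis distrib_left)
  qed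
  also have "\<dots> = T s" unfolding T_def JG_def using JG_integrable[OF s] by simp
  finally show ?thesis .
qed

definition linear_rate :: "nat \<Rightarrow> real" where
  "linear_rate n = (if n \<le> k then kfactor * real (n - 1) else real n)"

definition source :: "nat \<Rightarrow> real \<Rightarrow> real" where
  "source n s = real n * Gam \<beta> s / 2 * (\<Sum>j=1..n-1. C j s * C (n - j) s)"

lemma linear_rate_le: "2 \<le> n \<Longrightarrow> linear_rate n \<le> kfactor * real (n - 1)"
proof -
  assume "2 \<le> n"
  have "real k * real n \<le> (real k + 1) * real (n - 1)" if "k < n"
    using that \<open>2 \<le> n\<close> by (simp add: of_nat_diff algebra_simps)
  then show ?thesis using k_ge_1 by (auto simp: linear_rate_def kfactor_def field_simps)
qed

lemma C_has_real_derivative: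
  "2 \<le> n \<Longrightarrow> s \<in> {t0..t} \<Longrightarrow>
    (C n has_real_derivative linear_rate n * Bfun \<beta> s * C n s + source n s) (at s within {t0..t})"
  using Csmall[of n s] Clarge[of n s]
  by (cases "n \<le> k") (auto simp: linear_rate_def source_def kfactor_def)

lemma C_nonneg: "1 \<le> n \<Longrightarrow> s \<in> {t0..t} \<Longrightarrow> 0 \<le> C n s"
proof (induction n arbitrary: s rule: less_induct)
  case (less n)
  show ?case
  proof (cases "n = 1")
    case False
    then have n: "2 \<le> n" using less.prems by simp
    show ?thesis
    proof (rule nonneg_if_linear_differential_inequality[where f="C n" and s=s
          and L="\<lambda>s. linear_rate n * Bfun \<beta> s"
          and f'="\<lambda>s. linear_rate n * Bfun \<beta> s * C n s + source n s"])
      show "continuous_on {t0..t} (\<lambda>s. linear_rate n * Bfun \<beta> s)"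
        by (intro continuous_intros Bfun_continuous_on)
      show "linear_rate n * Bfun \<beta> s * C n s \<le> linear_rate n * Bfun \<beta> s * C n s + source n s"
        if s: "s \<in> {t0..t}" for s
      proof -
        have "0 \<le> (\<Sum>j=1..n-1. C j s * C (n - j) s)"
          by (intro sum_nonneg mult_nonneg_nonneg less.IH) (use s n in auto)
        then show ?thesis unfolding source_def using Gam_pos[OF s] by simp
      qed
    qed (use less.prems Cinit[OF n] C_has_real_derivative[OF n] in simp_all)
  qed (use C1 less.prems in simp)
qed

definition majorant :: "nat \<Rightarrow> real \<Rightarrow> real" where
  "majorant n s = lambert_coeff (n - 1) * T s ^ (n - 1)"

lemma majorant_nonneg: "s \<in> {t0..t} \<Longrightarrow> 0 \<le> majorant n s"
  unfolding majorant_def by (simp add: lambert_coeff_nonneg T_nonneg)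

lemma majorant_convolution:
  "(\<Sum>j=1..Suc m. majorant j s * majorant (Suc (Suc m) - j) s)
    = T s ^ m * (\<Sum>i\<le>m. lambert_coeff i * lambert_coeff (m - i))"
proof -
  have "(\<Sum>j=1..Suc m. majorant j s * majorant (Suc (Suc m) - j) s)
      = (\<Sum>i=0..m. majorant (Suc i) s * majorant (Suc (m - i)) s)"
    unfolding One_nat_def sum.atLeast_Suc_atMost_Suc_shift
    by (intro sum.cong) (auto simp: Suc_diff_le)
  also have "\<dots> = (\<Sum>i\<le>m. T s ^ m * (lambert_coeff i * lambert_coeff (m - i)))"
    by (intro sum.cong) (auto simp: majorant_def atLeast0AtMost mult_ac simp flip: power_add)
  finally show ?thesis by (simp add: sum_distrib_left)
qed

lemma majorant_has_real_derivative:
  assumes n: "2 \<le> n" and s: "s \<in> {t0..t}"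
  shows "(majorant n has_real_derivative kfactor * real (n - 1) * Bfun \<beta> s * majorant n s
           + real n * Gam \<beta> s / 2 * (\<Sum>j=1..n-1. majorant j s * majorant (n - j) s))
         (at s within {t0..t})"
proof -
  obtain m where m: "n = Suc (Suc m)" using n by (metis add_2_eq_Suc le_Suc_ex)
  have "(majorant n has_real_derivative
      lambert_coeff (Suc m) * (real (Suc m) * ((kfactor * Bfun \<beta> s * T s + Gam \<beta> s) * T s ^ m)))
      (at s within {t0..t})"
    unfolding majorant_def[abs_def] m
    using DERIV_cmult[OF DERIV_power[OF T_has_real_derivative[OF s], where n="Suc m"]]
    by (simp del: lambert_coeff.simps)
  moreover have "lambert_coeff (Suc m) * (real (Suc m) * ((kfactor * Bfun \<beta> s * T s + Gam \<beta> s) * T s ^ m))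
      = kfactor * real (Suc m) * Bfun \<beta> s * (lambert_coeff (Suc m) * (T s ^ m * T s))
        + Gam \<beta> s * T s ^ m * ((real m + 1) * lambert_coeff (Suc m))"
    by (simp add: algebra_simps del: lambert_coeff.simps)
  moreover have "\<dots> = kfactor * real (n - 1) * Bfun \<beta> s * majorant n s
      + real n * Gam \<beta> s / 2 * (\<Sum>j=1..n-1. majorant j s * majorant (n - j) s)"
  proof -
    have "(\<Sum>j=1..n-1. majorant j s * majorant (n - j) s)
        = T s ^ m * (\<Sum>i\<le>m. lambert_coeff i * lambert_coeff (m - i))"
      using majorant_convolution[where m=m and s=s] by (simp add: m)
    then show ?thesis
      unfolding lambert_coeff_Suc by (simp add: m majorant_def algebra_simps del: lambert_coeff.simps)
  qed
  ultimately show ?thesis by simp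
qed

lemma source_le_majorant_source:
  assumes s: "s \<in> {t0..t}" and C_le: "\<And>j. 1 \<le> j \<Longrightarrow> j < n \<Longrightarrow> C j s \<le> majorant j s"
  shows "source n s \<le> real n * Gam \<beta> s / 2 * (\<Sum>j=1..n-1. majorant j s * majorant (n - j) s)"
proof -
  have "C j s * C (n - j) s \<le> majorant j s * majorant (n - j) s" if "j \<in> {1..n-1}" for j
    using that s by (intro mult_mono C_le C_nonneg majorant_nonneg) auto
  then show ?thesis
    unfolding source_def using Gam_pos[OF s] by (intro mult_left_mono sum_mono) auto
qed

lemma C_le_majorant: "1 \<le> n \<Longrightarrow> s \<in> {t0..t} \<Longrightarrow> C n s \<le> majorant n s"
proof (induction n arbitrary: s rule: less_induct)
  case (less n)
  show ?case
  proof (cases "n = 1")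
    case False
    then have n: "2 \<le> n" using less.prems by simp
    define M' where "M' s = kfactor * real (n - 1) * Bfun \<beta> s * majorant n s
      + real n * Gam \<beta> s / 2 * (\<Sum>j=1..n-1. majorant j s * majorant (n - j) s)" for s
    have "0 \<le> majorant n s - C n s"
    proof (rule nonneg_if_linear_differential_inequality[where f="\<lambda>s. majorant n s - C n s" and s=s
          and L="\<lambda>s. kfactor * real (n - 1) * Bfun \<beta> s"
          and f'="\<lambda>s. M' s - (linear_rate n * Bfun \<beta> s * C n s + source n s)"])
      show "continuous_on {t0..t} (\<lambda>s. kfactor * real (n - 1) * Bfun \<beta> s)"
        by (intro continuous_intros Bfun_continuous_on)
      show "((\<lambda>s. majorant n s - C n s) has_real_derivative
          M' s - (linear_rate n * Bfun \<beta> s * C n s + source n s)) (at s within {t0..t})"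
        if "s \<in> {t0..t}" for s
        unfolding M'_def
        by (intro DERIV_diff majorant_has_real_derivative C_has_real_derivative n that)
      show "kfactor * real (n - 1) * Bfun \<beta> s * (majorant n s - C n s)
          \<le> M' s - (linear_rate n * Bfun \<beta> s * C n s + source n s)"
        if s: "s \<in> {t0..t}" for s
      proof -
        have "linear_rate n * Bfun \<beta> s * C n s \<le> kfactor * real (n - 1) * Bfun \<beta> s * C n s"
          using linear_rate_le[OF n] Bfun_pos[OF s] C_nonneg[OF _ s, of n] n
          by (intro mult_right_mono) auto
        moreover have "source n s
            \<le> real n * Gam \<beta> s / 2 * (\<Sum>j=1..n-1. majorant j s * majorant (n - j) s)"
          using s less.IH by (intro source_le_majorant_source) auto
        ultimately show ?thesis unfolding M'_def by (simp add: algebra_simps)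
      qed
      show "0 \<le> majorant n t0 - C n t0"
        using Cinit[OF n] n by (simp add: majorant_def T_t0 lambert_coeff_nonneg)
    qed (use less.prems in simp)
    then show ?thesis by simp
  qed (use C1 less.prems in \<open>simp add: majorant_def\<close>)
qed

end

theorem proposition3p4:
  fixes \<beta> t0 t z :: real and k :: nat and C :: "nat \<Rightarrow> real \<Rightarrow> real"
  assumes "\<beta> > 0" and "k \<ge> 1" and "0 < t0" and "t0 < t"
    and C1: "\<And>s. s \<in> {t0..t} \<Longrightarrow> C 1 s = 1"
    and Csmall: "\<And>n s. 2 \<le> n \<Longrightarrow> n \<le> k \<Longrightarrow> s \<in> {t0..t} \<Longrightarrow>
       (C n has_real_derivative
          ((real k + 1) / real k * real (n - 1) * Bfun \<beta> s * C n s
           + real n * Gam \<beta> s / 2 * (\<Sum>j=1..n-1. C j s * C (n - j) s)))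
        (at s within {t0..t})"
    and Clarge: "\<And>n s. k < n \<Longrightarrow> n \<ge> 2 \<Longrightarrow> s \<in> {t0..t} \<Longrightarrow>
       (C n has_real_derivative
          (real n * Bfun \<beta> s * C n s
           + real n * Gam \<beta> s / 2 * (\<Sum>j=1..n-1. C j s * C (n - j) s)))
        (at s within {t0..t})"
    and Cinit: "\<And>n. n \<ge> 2 \<Longrightarrow> C n t0 = 0"
    and "z \<ge> 0"
    and "exp 1 * z * tau \<beta> k t0 t < 1"
  shows "summable (\<lambda>n. C (n + 1) t * z ^ n)
    \<and> (\<Sum>n. C (n + 1) t * z ^ n)
        \<le> (if z = 0 then 1
            else - 1 / (tau \<beta> k t0 t * z) * lambertW (- tau \<beta> k t0 t * z))"
proof -
  interpret coefficient_ode \<beta> t0 t k C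
    by (rule coefficient_ode.intro) (fact assms)+
  have t: "t \<in> {t0..t}" using \<open>t0 < t\<close> by simp
  have "summable (\<lambda>n. C (n + 1) t * z ^ n) \<and> (\<Sum>n. C (n + 1) t * z ^ n)
      \<le> (if z = 0 then 1 else - 1 / (T t * z) * lambertW (- T t * z))"
  proof (rule majorized_series_le_lambertW)
    show "0 \<le> C (n + 1) t" for n using C_nonneg[OF _ t] by simp
    show "C (n + 1) t \<le> lambert_coeff n * T t ^ n" for n
      using C_le_majorant[OF _ t, of "n + 1"] by (simp add: majorant_def)
  qed (use T_pos assms tau_eq_T[OF t] in auto)
  then show ?thesis by (simp only: tau_eq_T[OF t])
qed

end
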